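(* Fix $\varepsilon>0$, let $k_n=e^{n^{2+\varepsilon}}$ and $C=6/\pi^2$, and let $X$ be the random variable with $\mathbb{P}(X=k_n)=\mathbb{P}(X=-k_n)=C/(2k_n^2n^2)$ for $n=1,2,\dots$ and $\mathbb{P}(X=0)=1-\sum_n C/(k_n^2n^2)$. Then $\mathbb{E}X=0$, $\operatorname{Var}(X)=1$, $\mathbb{E}\big[X^2(\log^+|X|)^{1/2}\big]=\infty$, and \[ \limsup_{n\to\infty}\frac{Q_n}{\sqrt{\log n}}=\infty,\qquad\text{where } Q_n=\sum_{k=1}^n\frac1k\Big(\sigma^2-\mathbb{E}\big[|X-\mu|^2\mathbf{1}_{\{|X-\mu|\le\sigma k\}}\big]\Big) \] with $\mu=0,\sigma=1$. In particular, for $f$ with $f''(\mu)\neq0$, $b_n-\tilde b_n\neq o(\sqrt{\log n})$, where $b_n=nf(\mu)+\frac{f''(\mu)}{2}\sum_{k=1}^n\frac1k\mathbb{E}[|X-\mu|^2\mathbf{1}_{\{|X-\mu|\le\sigma k\}}]$ and $\tilde b_n=nf(\mu)+\frac{f''(\mu)\sigma^2}{2}\log n$.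
   Context: $\log^+x=\log(x\vee1)$. *)

theory Defs
  imports "HOL-Probability.Probability" "HOL-Library.Landau_Symbols"
begin

definition logp :: "real \<Rightarrow> real" where
  "logp x = ln (max x 1)"

definition kseq :: "real \<Rightarrow> nat \<Rightarrow> real" where
  "kseq eps n = exp (real n powr (2 + eps))"

definition Cconst :: real where
  "Cconst = 6 / pi\<^sup>2"

end

theory Submission
  imports Defs "HOL-Real_Asymp.Real_Asymp"
begin

(*
  (2) The concrete distribution: here (k_n)\<^sup>2 P(X = k_n) = C/(2n\<^sup>2), so Var X = C \<pi>\<^sup>2/6 = 1,
      while (k_n)\<^sup>2 sqrt(log k_n) P(X = k_n) \<ge> C/(2n) is not summable.  Moreover the truncation
      defect 1 - E[X\<^sup>2 1{|X| \<le> t}] is at least C/(8j) for every t < k_j, because the atoms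
      k_j, ..., k_(2j-1) lie beyond t.

  (3) Summing this defect up to N \<approx> k_j gives Q_N \<ge> C/(8j) \<cdot> log k_j = C/8 \<cdot> j^(1+\<epsilon>), whereas
      sqrt(log N) \<le> j^(1+\<epsilon>/2); hence limsup Q_n / sqrt(log n) = \<infinity>.  Since
      b_n - b~_n = -(f''(\<mu>)/2) (Q_n - (H_n - log n)) and H_n - log n converges (Euler's
      constant), b_n - b~_n = o(sqrt(log n)) would force Q_n / sqrt(log n) \<rightarrow> 0.
*)

lemma kseq_pos: "kseq eps n > 0"
  by (simp add: kseq_def)

lemma kseq_ge_one: "kseq eps n \<ge> 1"
  by (simp add: kseq_def)

lemma ln_kseq: "ln (kseq eps n) = real n powr (2 + eps)"
  by (simp add: kseq_def)

lemma strict_mono_kseq: "eps > 0 \<Longrightarrow> strict_mono (kseq eps)"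
  unfolding kseq_def by (auto intro!: strict_monoI powr_less_mono2)

lemma Cconst_pos: "Cconst > 0"
  by (simp add: Cconst_def)

section \<open>Symmetric random variables with countably many atoms\<close>

locale symmetric_atoms = prob_space M for M :: "'a measure" +
  fixes X :: "'a \<Rightarrow> real" and a p :: "nat \<Rightarrow> real"
  assumes X_measurable[measurable]: "X \<in> borel_measurable M"
    and atoms_pos: "\<And>n. a n > 0"
    and atoms_inj: "inj a"
    and prob_pos_atom: "\<And>n. prob {\<omega>\<in>space M. X \<omega> = a n} = p n"
    and prob_neg_atom: "\<And>n. prob {\<omega>\<in>space M. X \<omega> = - a n} = p n"
    and prob_zero: "prob {\<omega>\<in>space M. X \<omega> = 0} = 1 - 2 * (\<Sum>n. p n)"
begin

definition level_set :: "real \<Rightarrow> 'a set" where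
  "level_set c = {\<omega>\<in>space M. X \<omega> = c}"

lemma level_set_sets[measurable]: "level_set c \<in> sets M"
  unfolding level_set_def by measurable

lemma disjoint_level_sets: "inj f \<Longrightarrow> disjoint_family (\<lambda>n. level_set (f n))"
  by (auto simp: disjoint_family_on_def level_set_def dest: injD)

lemma atoms_distinct: "a n \<noteq> 0" "a n \<noteq> - a m" "- a n \<noteq> a m"
  using atoms_pos[of n] atoms_pos[of m] by auto

lemma p_nonneg: "p n \<ge> 0"
  using prob_pos_atom[of n] by (metis measure_nonneg)

lemma p_sums:
  assumes "inj f" and "\<And>n. prob (level_set (f n)) = p n"
  shows "p sums prob (\<Union>n. level_set (f n))"
  using finite_measure_UNION[of "\<lambda>n. level_set (f n)"] disjoint_level_sets[OF assms(1)] assms(2)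
  by (auto simp: image_subset_iff)

lemma AE_atoms: "AE \<omega> in M. X \<omega> \<in> {0} \<union> range a \<union> range (\<lambda>n. - a n)"
proof -
  let ?Z = "level_set 0" and ?P = "\<Union>n. level_set (a n)" and ?N = "\<Union>n. level_set (- a n)"
  have inj_neg: "inj (\<lambda>n. - a n)"
    using atoms_inj by (auto simp: inj_def)
  have "?Z \<inter> ?P = {}" "(?Z \<union> ?P) \<inter> ?N = {}"
    using atoms_distinct by (auto simp: level_set_def)
  then have "prob (?Z \<union> ?P \<union> ?N) = prob ?Z + prob ?P + prob ?N"
    by (simp add: finite_measure_Union)
  also have "\<dots> = 1"
    using prob_zero sums_unique[OF p_sums[OF atoms_inj]] sums_unique[OF p_sums[OF inj_neg]]
      prob_pos_atom prob_neg_atom by (simp add: level_set_def)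
  finally have "AE \<omega> in M. \<omega> \<in> ?Z \<union> ?P \<union> ?N"
    by (intro AE_prob_1)
  then show ?thesis
    by eventually_elim (auto simp: level_set_def)
qed

lemma atom_decomposition:
  fixes g :: "real \<Rightarrow> ennreal"
  assumes "x \<in> {0} \<union> range a \<union> range (\<lambda>n. - a n)"
  shows "g x = g 0 * indicator {0} x + (\<Sum>n. g (a n) * indicator {a n} x)
           + (\<Sum>n. g (- a n) * indicator {- a n} x)"
proof -
  have single: "(\<Sum>n. g (c n) * indicator {c n} (c m)) = g (c m)" if "inj c" for c :: "nat \<Rightarrow> real" and m
  proof -
    have "(\<lambda>n. g (c n) * indicator {c n} (c m)) = (\<lambda>n. if n = m then g (c m) else 0)"
      using that by (auto simp: indicator_def inj_eq)
    then show ?thesis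
      using sums_unique[OF sums_single[of m "\<lambda>_. g (c m)"]] by simp
  qed
  have inj_neg: "inj (\<lambda>n. - a n)"
    using atoms_inj by (auto simp: inj_def)
  from assms consider "x = 0" | m where "x = a m" | m where "x = - a m"
    by auto
  then show ?thesis
  proof cases
    case 1
    then show ?thesis using atoms_distinct by (simp add: indicator_def)
  next
    case 2
    then show ?thesis using single[OF atoms_inj] atoms_distinct by (simp add: indicator_def)
  next
    case 3
    then show ?thesis using single[OF inj_neg] atoms_distinct by (simp add: indicator_def)
  qed
qed

lemma nn_integral_atoms:
  fixes g :: "real \<Rightarrow> ennreal"
  shows "(\<integral>\<^sup>+\<omega>. g (X \<omega>) \<partial>M) = g 0 * ennreal (prob (level_set 0))
     + (\<Sum>n. g (a n) * ennreal (p n)) + (\<Sum>n. g (- a n) * ennreal (p n))"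
proof -
  let ?ind = "\<lambda>c \<omega>. indicator (level_set c) \<omega> :: ennreal"
  have "AE \<omega> in M. g (X \<omega>) = g 0 * ?ind 0 \<omega> + (\<Sum>n. g (a n) * ?ind (a n) \<omega>)
           + (\<Sum>n. g (- a n) * ?ind (- a n) \<omega>)"
    using AE_atoms AE_space
  proof eventually_elim
    case (elim \<omega>)
    then show ?case
      using atom_decomposition[OF elim(1), of g] by (simp add: level_set_def indicator_def)
  qed
  then have "(\<integral>\<^sup>+\<omega>. g (X \<omega>) \<partial>M) = (\<integral>\<^sup>+\<omega>. g 0 * ?ind 0 \<omega> + (\<Sum>n. g (a n) * ?ind (a n) \<omega>)
           + (\<Sum>n. g (- a n) * ?ind (- a n) \<omega>) \<partial>M)"
    by (rule nn_integral_cong_AE)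
  also have "\<dots> = (\<integral>\<^sup>+\<omega>. g 0 * ?ind 0 \<omega> \<partial>M) + (\<integral>\<^sup>+\<omega>. (\<Sum>n. g (a n) * ?ind (a n) \<omega>) \<partial>M)
           + (\<integral>\<^sup>+\<omega>. (\<Sum>n. g (- a n) * ?ind (- a n) \<omega>) \<partial>M)"
    by (subst nn_integral_add; simp)+
  also have "\<dots> = g 0 * ennreal (prob (level_set 0))
     + (\<Sum>n. g (a n) * ennreal (p n)) + (\<Sum>n. g (- a n) * ennreal (p n))"
    using prob_pos_atom prob_neg_atom
    by (simp add: nn_integral_suminf nn_integral_cmult_indicator emeasure_eq_measure level_set_def)
  finally show ?thesis .
qed

lemma nn_integral_atoms_ge:
  fixes g :: "real \<Rightarrow> ennreal"
  shows "(\<Sum>n. g (a n) * ennreal (p n)) \<le> (\<integral>\<^sup>+\<omega>. g (X \<omega>) \<partial>M)"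
  unfolding nn_integral_atoms by (simp add: add.assoc add_increasing)

lemma second_moment:
  assumes "(\<lambda>n. (a n)\<^sup>2 * p n) sums s"
  shows "integrable M (\<lambda>\<omega>. (X \<omega>)\<^sup>2)" and "expectation (\<lambda>\<omega>. (X \<omega>)\<^sup>2) = 2 * s"
proof -
  have s_nonneg: "s \<ge> 0"
    using assms p_nonneg by (intro sums_le[OF _ sums_zero assms]) auto
  have half: "(\<Sum>n. ennreal (c n) * ennreal (p n)) = ennreal s"
    if "\<And>n. (c n) = (a n)\<^sup>2" for c
  proof -
    have "(\<Sum>n. ennreal (c n) * ennreal (p n)) = (\<Sum>n. ennreal ((a n)\<^sup>2 * p n))"
      using that by (simp add: ennreal_mult')
    also have "\<dots> = ennreal s"
      using assms p_nonneg by (intro suminf_ennreal_eq) auto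
    finally show ?thesis .
  qed
  have "(\<integral>\<^sup>+\<omega>. ennreal ((X \<omega>)\<^sup>2) \<partial>M) = ennreal s + ennreal s"
    using nn_integral_atoms[of "\<lambda>x. ennreal (x\<^sup>2)"] half[of "\<lambda>n. (a n)\<^sup>2"] half[of "\<lambda>n. (- a n)\<^sup>2"]
    by simp
  also have "\<dots> = ennreal (2 * s)"
    using s_nonneg by (simp flip: ennreal_plus)
  finally have "(\<integral>\<^sup>+\<omega>. ennreal ((X \<omega>)\<^sup>2) \<partial>M) = ennreal (2 * s)" .
  then show "integrable M (\<lambda>\<omega>. (X \<omega>)\<^sup>2)" and "expectation (\<lambda>\<omega>. (X \<omega>)\<^sup>2) = 2 * s"
    using nn_integral_eq_integrable[of "\<lambda>\<omega>. (X \<omega>)\<^sup>2" M "2 * s"] s_nonneg by auto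
qed

text \<open>By symmetry an integrable X has mean zero: its positive and negative parts have the
  same integral \<open>\<Sum> a n p n\<close>.\<close>
lemma mean_zero:
  assumes "integrable M X"
  shows "expectation X = 0"
proof -
  have pos: "(\<integral>\<^sup>+\<omega>. ennreal (X \<omega>) \<partial>M) = (\<Sum>n. ennreal (a n) * ennreal (p n))"
    using nn_integral_atoms[of "\<lambda>x. ennreal x"] atoms_pos by (simp add: ennreal_neg less_imp_le)
  have neg: "(\<integral>\<^sup>+\<omega>. ennreal (- X \<omega>) \<partial>M) = (\<Sum>n. ennreal (a n) * ennreal (p n))"
    using nn_integral_atoms[of "\<lambda>x. ennreal (- x)"] atoms_pos by (simp add: ennreal_neg less_imp_le)
  show ?thesis
    using real_lebesgue_integral_def[OF assms] pos neg by simp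
qed

end

lemma inverse_squares_block:
  assumes "j \<ge> 1"
  shows "1 / (4 * real j) \<le> (\<Sum>n\<in>{j-1..<2*j-1}. 1 / (real n + 1)\<^sup>2)"
proof -
  have "(\<Sum>n\<in>{j-1..<2*j-1}. 1 / (2 * real j)\<^sup>2) \<le> (\<Sum>n\<in>{j-1..<2*j-1}. 1 / (real n + 1)\<^sup>2)"
  proof (rule sum_mono)
    fix n assume "n \<in> {j-1..<2*j-1}"
    then have "real n + 1 \<le> 2 * real j"
      using assms by auto
    then show "1 / (2 * real j)\<^sup>2 \<le> 1 / (real n + 1)\<^sup>2"
      by (intro divide_left_mono power_mono mult_pos_pos) auto
  qed
  moreover have "(\<Sum>n\<in>{j-1..<2*j-1}. 1 / (2 * real j)\<^sup>2) = 1 / (4 * real j)"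
    using assms by (simp add: power2_eq_square)
  ultimately show ?thesis
    by simp
qed

text \<open>If the two second order centerings \<open>n a + c/2 \<cdot> S_n\<close> and \<open>n a + c/2 \<cdot> log n\<close> differ
  by o(sqrt(log n)), then \<open>(H_n - S_n) / sqrt(log n) \<rightarrow> 0\<close>, because \<open>H_n - log n\<close> converges
  to Euler's constant.\<close>
lemma bias_small_imp_ratio_tendsto_zero:
  fixes S :: "nat \<Rightarrow> real"
  assumes c: "c \<noteq> 0"
    and small: "(\<lambda>n. (real n * a + c / 2 * S n) - (real n * a + c / 2 * ln (real n)))
                  \<in> o(\<lambda>n. sqrt (ln (real n)))"
  shows "(\<lambda>n. (harm n - S n) / sqrt (ln (real n))) \<longlonglongrightarrow> 0"
proof -
  let ?d = "\<lambda>n. (real n * a + c / 2 * S n) - (real n * a + c / 2 * ln (real n))"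
  let ?g = "\<lambda>n. sqrt (ln (real n))"
  have d: "(\<lambda>n. ?d n / ?g n) \<longlonglongrightarrow> 0"
    using small by (rule smalloD_tendsto)
  have g: "(\<lambda>n. 1 / ?g n) \<longlonglongrightarrow> 0"
    by real_asymp
  have split: "harm n - S n = (harm n - ln (real n)) - (2 / c) * ?d n" for n
  proof -
    have "(2 / c) * ?d n = (2 / c) * (c / 2) * (S n - ln (real n))"
      by (simp add: algebra_simps)
    also have "\<dots> = S n - ln (real n)"
      using c by simp
    finally show ?thesis
      by simp
  qed
  have eq: "(harm n - S n) / ?g n = (harm n - ln (real n)) * (1 / ?g n) - (2 / c) * (?d n / ?g n)" for n
    unfolding split[of n] by (simp add: diff_divide_distrib)
  have "(\<lambda>n. (harm n - ln (real n)) * (1 / ?g n) - (2 / c) * (?d n / ?g n))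
          \<longlonglongrightarrow> euler_mascheroni * 0 - (2 / c) * 0"
    by (intro tendsto_intros euler_mascheroni_LIMSEQ g d)
  then show ?thesis
    by (simp add: eq)
qed

definition cutoff :: "real \<Rightarrow> nat \<Rightarrow> nat" where
  "cutoff eps j = nat \<lceil>kseq eps j\<rceil> - 1"

lemma cutoff_props:
  assumes eps: "eps > 0" and j: "j \<ge> 1"
  shows "real (cutoff eps j) < kseq eps j" "kseq eps j \<le> real (cutoff eps j) + 1"
    "cutoff eps j \<ge> j"
proof -
  have "\<lceil>kseq eps j\<rceil> \<ge> 1"
    using kseq_ge_one[of eps j] by simp
  then have "nat \<lceil>kseq eps j\<rceil> \<ge> 1" and "real (nat \<lceil>kseq eps j\<rceil>) = real_of_int \<lceil>kseq eps j\<rceil>"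
    by (linarith, simp add: of_nat_nat)
  then have r: "real (cutoff eps j) = real_of_int \<lceil>kseq eps j\<rceil> - 1"
    unfolding cutoff_def by (simp add: of_nat_diff)
  show "real (cutoff eps j) < kseq eps j" "kseq eps j \<le> real (cutoff eps j) + 1"
    using r ceiling_correct[of "kseq eps j"] by linarith+
  have "real j \<le> real j powr (2 + eps)"
    using powr_mono[of 1 "2 + eps" "real j"] eps j by simp
  also have "\<dots> \<le> kseq eps j - 1"
    unfolding kseq_def using exp_ge_add_one_self[of "real j powr (2 + eps)"] by linarith
  finally show "cutoff eps j \<ge> j"
    using r le_of_int_ceiling[of "kseq eps j"] by linarith
qed

section \<open>The concrete distribution\<close>

locale counterexample = prob_space M for M :: "'a measure" +
  fixes X :: "'a \<Rightarrow> real" and eps :: real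
  assumes eps_pos: "eps > 0"
    and X_measurable[measurable]: "X \<in> borel_measurable M"
    and prob_pos_kseq: "\<And>n. n \<ge> 1 \<Longrightarrow>
        prob {\<omega>\<in>space M. X \<omega> = kseq eps n} = Cconst / (2 * (kseq eps n)\<^sup>2 * (real n)\<^sup>2)"
    and prob_neg_kseq: "\<And>n. n \<ge> 1 \<Longrightarrow>
        prob {\<omega>\<in>space M. X \<omega> = - kseq eps n} = Cconst / (2 * (kseq eps n)\<^sup>2 * (real n)\<^sup>2)"
    and prob_zero_value: "prob {\<omega>\<in>space M. X \<omega> = 0} =
        1 - (\<Sum>n. Cconst / ((kseq eps (Suc n))\<^sup>2 * (real (Suc n))\<^sup>2))"
begin

text \<open>The atoms re-indexed from 0.\<close>
definition atom :: "nat \<Rightarrow> real" where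
  "atom n = kseq eps (Suc n)"

definition atom_prob :: "nat \<Rightarrow> real" where
  "atom_prob n = Cconst / (2 * (atom n)\<^sup>2 * (real (Suc n))\<^sup>2)"

lemma atom_sq_prob: "(atom n)\<^sup>2 * atom_prob n = Cconst / 2 * (1 / (real n + 1)\<^sup>2)"
  using kseq_pos[of eps "Suc n"] by (simp add: atom_prob_def atom_def field_simps)

lemma atom_sq_prob_sums: "(\<lambda>n. (atom n)\<^sup>2 * atom_prob n) sums (1 / 2)"
proof -
  have "(\<lambda>n. Cconst / 2 * (1 / (real n + 1)\<^sup>2)) sums (Cconst / 2 * (pi\<^sup>2 / 6))"
    using inverse_squares_sums by (intro sums_mult) (simp add: add.commute)
  then show ?thesis
    by (simp add: atom_sq_prob Cconst_def)
qed

lemma atom_prob_summable: "summable atom_prob"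
proof (rule summable_comparison_test)
  show "\<exists>N. \<forall>n\<ge>N. norm (atom_prob n) \<le> (atom n)\<^sup>2 * atom_prob n"
  proof (intro exI allI impI)
    fix n
    have "1 \<le> (atom n)\<^sup>2"
      using kseq_ge_one[of eps "Suc n"] by (simp add: atom_def one_le_power)
    moreover have "atom_prob n \<ge> 0"
      using Cconst_pos by (simp add: atom_prob_def)
    ultimately show "norm (atom_prob n) \<le> (atom n)\<^sup>2 * atom_prob n"
      by (simp add: mult_le_cancel_right1)
  qed
  show "summable (\<lambda>n. (atom n)\<^sup>2 * atom_prob n)"
    using atom_sq_prob_sums by (rule sums_summable)
qed

sublocale atoms: symmetric_atoms M X atom atom_prob
proof unfold_locales
  show "random_variable borel X"
    by simp
  show "atom n > 0" for n
    by (simp add: atom_def kseq_pos)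
  show "inj atom"
    using strict_mono_kseq[OF eps_pos] by (auto simp: inj_def atom_def strict_mono_eq)
  show "prob {\<omega>\<in>space M. X \<omega> = atom n} = atom_prob n"
    and "prob {\<omega>\<in>space M. X \<omega> = - atom n} = atom_prob n" for n
    using prob_pos_kseq[of "Suc n"] prob_neg_kseq[of "Suc n"] by (simp_all add: atom_def atom_prob_def)
  have "(\<lambda>n. Cconst / ((kseq eps (Suc n))\<^sup>2 * (real (Suc n))\<^sup>2)) = (\<lambda>n. 2 * atom_prob n)"
    by (simp add: atom_prob_def atom_def)
  then show "prob {\<omega>\<in>space M. X \<omega> = 0} = 1 - 2 * (\<Sum>n. atom_prob n)"
    using prob_zero_value atom_prob_summable by (simp add: suminf_mult)
qed

lemma second_moment_one: "integrable M (\<lambda>\<omega>. (X \<omega>)\<^sup>2)" "expectation (\<lambda>\<omega>. (X \<omega>)\<^sup>2) = 1"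
  using atoms.second_moment[OF atom_sq_prob_sums] by simp_all

lemma integrable_X: "integrable M X"
  using square_integrable_imp_integrable[OF X_measurable second_moment_one(1)] .

lemma mean_zero: "expectation X = 0"
  using atoms.mean_zero[OF integrable_X] .

text \<open>Since \<open>log k_n = n^(2+\<epsilon>) \<ge> n^2\<close>, the atom at k_n contributes at least C/(2n) to
  \<open>E[X^2 sqrt(log^+ |X|)]\<close>, and the harmonic series diverges.\<close>
lemma log_moment_term_ge:
  "Cconst / 2 * inverse (real (Suc n)) \<le> (atom n)\<^sup>2 * sqrt (logp \<bar>atom n\<bar>) * atom_prob n"
proof -
  have "(real (Suc n))\<^sup>2 = real (Suc n) powr 2"
    by (simp add: powr_numeral)
  also have "\<dots> \<le> real (Suc n) powr (2 + eps)"
    using eps_pos by (intro powr_mono) auto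
  also have "\<dots> = logp \<bar>atom n\<bar>"
    using kseq_ge_one[of eps "Suc n"] by (simp add: logp_def atom_def ln_kseq)
  finally have "real (Suc n) \<le> sqrt (logp \<bar>atom n\<bar>)"
    by (rule real_le_rsqrt)
  then have "(atom n)\<^sup>2 * atom_prob n * real (Suc n) \<le> (atom n)\<^sup>2 * atom_prob n * sqrt (logp \<bar>atom n\<bar>)"
    using atoms.p_nonneg[of n] by (intro mult_left_mono) auto
  moreover have "(atom n)\<^sup>2 * atom_prob n * real (Suc n) = Cconst / 2 * inverse (real (Suc n))"
  proof -
    have "(atom n)\<^sup>2 * atom_prob n * real (Suc n) = Cconst / 2 * (1 / (real n + 1)\<^sup>2) * (real n + 1)"
      by (simp add: atom_sq_prob)
    also have "\<dots> = Cconst / 2 * inverse (real (Suc n))"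
      by (simp add: power2_eq_square divide_simps)
    finally show ?thesis .
  qed
  ultimately show ?thesis
    by (simp add: ac_simps)
qed

lemma log_moment_infinite:
  "(\<integral>\<^sup>+\<omega>. ennreal ((X \<omega>)\<^sup>2 * sqrt (logp \<bar>X \<omega>\<bar>)) \<partial>M) = \<infinity>"
proof -
  let ?g = "\<lambda>x. ennreal (x\<^sup>2 * sqrt (logp \<bar>x\<bar>))"
  have "\<not> summable (\<lambda>n. inverse (real (Suc n)) :: real)"
    using not_summable_harmonic[where 'a=real] summable_Suc_iff[of "\<lambda>n. inverse (real n)"] by simp
  then have "\<not> summable (\<lambda>n. Cconst / 2 * inverse (real (Suc n)))"
    using Cconst_pos by (simp add: summable_cmult_iff)
  then have "\<infinity> = (\<Sum>n. ennreal (Cconst / 2 * inverse (real (Suc n))))"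
    using Cconst_pos summable_suminf_not_top[of "\<lambda>n. Cconst / 2 * inverse (real (Suc n))"] by fastforce
  also have "\<dots> \<le> (\<Sum>n. ?g (atom n) * ennreal (atom_prob n))"
  proof (intro suminf_le summableI)
    fix n
    have "?g (atom n) * ennreal (atom_prob n) = ennreal ((atom n)\<^sup>2 * sqrt (logp \<bar>atom n\<bar>) * atom_prob n)"
      using atoms.p_nonneg[of n] by (simp add: ennreal_mult'')
    then show "ennreal (Cconst / 2 * inverse (real (Suc n))) \<le> ?g (atom n) * ennreal (atom_prob n)"
      using log_moment_term_ge[of n] by (simp add: ennreal_leI)
  qed
  also have "\<dots> \<le> (\<integral>\<^sup>+\<omega>. ?g (X \<omega>) \<partial>M)"
    by (rule atoms.nn_integral_atoms_ge)
  finally show ?thesis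
    by (simp add: top_unique)
qed

definition truncated_moment :: "real \<Rightarrow> real" where
  "truncated_moment t = expectation (\<lambda>\<omega>. (X \<omega>)\<^sup>2 * indicator {\<omega>. \<bar>X \<omega>\<bar> \<le> t} \<omega>)"

definition tail_moment :: "real \<Rightarrow> real" where
  "tail_moment t = expectation (\<lambda>\<omega>. if t < \<bar>X \<omega>\<bar> then (X \<omega>)\<^sup>2 else 0)"

lemma integrable_tail: "integrable M (\<lambda>\<omega>. if t < \<bar>X \<omega>\<bar> then (X \<omega>)\<^sup>2 else 0)"
  by (rule Bochner_Integration.integrable_bound[OF second_moment_one(1)]) auto

lemma truncation_defect: "1 - truncated_moment t = tail_moment t"
proof -
  let ?trunc = "\<lambda>\<omega>. (X \<omega>)\<^sup>2 * indicator {\<omega>. \<bar>X \<omega>\<bar> \<le> t} \<omega>"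
  let ?tail = "\<lambda>\<omega>. if t < \<bar>X \<omega>\<bar> then (X \<omega>)\<^sup>2 else 0"
  have "integrable M ?trunc"
    by (rule Bochner_Integration.integrable_bound[OF second_moment_one(1)]) (auto simp: indicator_def)
  then have "expectation ?trunc + expectation ?tail = expectation (\<lambda>\<omega>. ?trunc \<omega> + ?tail \<omega>)"
    using integrable_tail by simp
  also have "(\<lambda>\<omega>. ?trunc \<omega> + ?tail \<omega>) = (\<lambda>\<omega>. (X \<omega>)\<^sup>2)"
    by (auto simp: indicator_def)
  finally show ?thesis
    using second_moment_one(2) by (simp add: truncated_moment_def tail_moment_def)
qed

lemma tail_moment_ge_atoms:
  assumes "finite F" and beyond: "\<And>n. n \<in> F \<Longrightarrow> t < atom n"
  shows "(\<Sum>n\<in>F. (atom n)\<^sup>2 * atom_prob n) \<le> tail_moment t"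
proof -
  let ?g = "\<lambda>x. ennreal (if t < \<bar>x\<bar> then x\<^sup>2 else 0)"
  have "ennreal (\<Sum>n\<in>F. (atom n)\<^sup>2 * atom_prob n) = (\<Sum>n\<in>F. ?g (atom n) * ennreal (atom_prob n))"
    using atoms.p_nonneg atoms.atoms_pos beyond
    by (simp add: sum_ennreal[symmetric] ennreal_mult'' less_imp_le)
  also have "\<dots> \<le> (\<Sum>n. ?g (atom n) * ennreal (atom_prob n))"
    by (intro sum_le_suminf summableI) (auto simp: assms(1))
  also have "\<dots> \<le> (\<integral>\<^sup>+\<omega>. ?g (X \<omega>) \<partial>M)"
    by (rule atoms.nn_integral_atoms_ge)
  also have "\<dots> = ennreal (tail_moment t)"
    unfolding tail_moment_def by (intro nn_integral_eq_integral integrable_tail) auto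
  finally show ?thesis
    by (simp add: ennreal_le_iff tail_moment_def)
qed

text \<open>If t < k_j, the j atoms k_j, ..., k_(2j-1) lie beyond t, so truncating at t loses
  at least C/(8j) of the variance.\<close>
lemma truncation_defect_ge:
  assumes j: "j \<ge> 1" and t: "t < kseq eps j"
  shows "Cconst / (8 * real j) \<le> 1 - truncated_moment t"
proof -
  let ?F = "{j-1..<2*j-1}"
  have "Cconst / (8 * real j) = Cconst / 2 * (1 / (4 * real j))"
    by simp
  also have "\<dots> \<le> Cconst / 2 * (\<Sum>n\<in>?F. 1 / (real n + 1)\<^sup>2)"
    using inverse_squares_block[OF j] Cconst_pos by (intro mult_left_mono) auto
  also have "\<dots> = (\<Sum>n\<in>?F. (atom n)\<^sup>2 * atom_prob n)"
    by (simp add: atom_sq_prob sum_distrib_left)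
  also have "\<dots> \<le> tail_moment t"
  proof (rule tail_moment_ge_atoms)
    fix n assume "n \<in> ?F"
    then have "kseq eps j \<le> atom n"
      using j strict_mono_kseq[OF eps_pos] by (auto simp: atom_def strict_mono_less_eq)
    then show "t < atom n"
      using t by simp
  qed simp
  finally show ?thesis
    by (simp add: truncation_defect)
qed

text \<open>The normalised bias sequence Q_n of the theorem (with \<open>\<mu> = 0\<close>, \<open>\<sigma> = 1\<close>).\<close>
definition Q :: "nat \<Rightarrow> real" where
  "Q n = (\<Sum>k = 1..n. 1 / real k * (1 - truncated_moment (real k)))"

lemma Q_eq_harm_minus: "Q n = harm n - (\<Sum>k = 1..n. 1 / real k * truncated_moment (real k))"
  unfolding Q_def harm_def by (simp add: right_diff_distrib sum_subtractf inverse_eq_divide)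

text \<open>Up to the cut-off N_j every defect is at least C/(8j), so
  \<open>Q(N_j) \<ge> C/(8j) H(N_j) \<ge> C/(8j) log k_j\<close>.\<close>
lemma Q_at_cutoff_ge:
  assumes j: "j \<ge> 1"
  shows "Cconst / (8 * real j) * real j powr (2 + eps) \<le> Q (cutoff eps j)"
proof -
  let ?N = "cutoff eps j"
  have "real j powr (2 + eps) = ln (kseq eps j)"
    by (simp add: ln_kseq)
  also have "\<dots> \<le> ln (real ?N + 1)"
    using cutoff_props(2)[OF eps_pos j] kseq_pos[of eps j] by simp
  also have "\<dots> \<le> harm ?N"
    by (rule ln_le_harm)
  finally have "Cconst / (8 * real j) * real j powr (2 + eps) \<le> Cconst / (8 * real j) * harm ?N"
    using Cconst_pos by (intro mult_left_mono) auto
  also have "\<dots> = (\<Sum>k = 1..?N. 1 / real k * (Cconst / (8 * real j)))"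
    by (simp add: harm_def sum_distrib_left inverse_eq_divide ac_simps)
  also have "\<dots> \<le> Q ?N"
    unfolding Q_def
  proof (intro sum_mono mult_left_mono)
    fix k assume "k \<in> {1..?N}"
    then have "real k < kseq eps j"
      using cutoff_props(1)[OF eps_pos j] by auto
    then show "Cconst / (8 * real j) \<le> 1 - truncated_moment (real k)"
      by (rule truncation_defect_ge[OF j])
  qed simp
  finally show ?thesis .
qed

text \<open>Since \<open>log N_j \<le> log k_j = j^(2+\<epsilon>)\<close>, the ratio at N_j is at least
  \<open>C/8 \<cdot> j^(\<epsilon>/2)\<close>, written as \<open>C/8 \<cdot> sqrt(j^(2+\<epsilon>)) / j\<close>.\<close>
lemma ratio_at_cutoff_ge:
  assumes j: "j \<ge> 2"
  shows "Cconst / 8 * (sqrt (real j powr (2 + eps)) / real j)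
           \<le> Q (cutoff eps j) / sqrt (ln (real (cutoff eps j)))"
proof -
  let ?N = "cutoff eps j" and ?L = "real j powr (2 + eps)"
  have L_pos: "?L > 0"
    using j by simp
  have lnN_pos: "ln (real ?N) > 0"
    using cutoff_props(3)[OF eps_pos, of j] j by simp
  have "ln (real ?N) \<le> ln (kseq eps j)"
    using cutoff_props(1,3)[OF eps_pos, of j] j by (intro ln_le_cancel_iff[THEN iffD2]) auto
  then have lnN_le: "ln (real ?N) \<le> ?L"
    by (simp add: ln_kseq)
  have Q_ge: "Cconst / (8 * real j) * ?L \<le> Q ?N"
    using Q_at_cutoff_ge j by simp
  moreover have "0 \<le> Cconst / (8 * real j) * ?L"
    using L_pos Cconst_pos by simp
  ultimately have Q_nonneg: "0 \<le> Q ?N"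
    by linarith
  have "Cconst / 8 * (sqrt ?L / real j) = Cconst / (8 * real j) * ?L / sqrt ?L"
    using L_pos by (simp add: real_div_sqrt field_simps)
  also have "\<dots> \<le> Q ?N / sqrt (ln (real ?N))"
    using Q_ge Q_nonneg lnN_pos lnN_le by (intro frac_le) auto
  finally show ?thesis .
qed

lemma limsup_Q: "limsup (\<lambda>n. ereal (Q n / sqrt (ln (real n)))) = \<infinity>"
proof (rule ereal_top)
  fix B :: real
  have "filterlim (\<lambda>j::nat. sqrt (real j powr (2 + eps)) / real j) at_top at_top"
    using eps_pos by real_asymp
  then have "eventually (\<lambda>j. 8 * B / Cconst \<le> sqrt (real j powr (2 + eps)) / real j) at_top"
    by (simp add: filterlim_at_top)
  show "ereal B \<le> limsup (\<lambda>n. ereal (Q n / sqrt (ln (real n))))"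
    unfolding limsup_INF_SUP
  proof (rule INF_greatest)
    fix n0 :: nat
    obtain j where j_large: "8 * B / Cconst \<le> sqrt (real j powr (2 + eps)) / real j"
      and j_ge: "j \<ge> max 2 n0"
      using eventually_conj[OF \<open>eventually _ at_top\<close> eventually_ge_at_top[of "max 2 n0"]]
      unfolding eventually_sequentially by blast
    have "B \<le> Cconst / 8 * (sqrt (real j powr (2 + eps)) / real j)"
      using j_large Cconst_pos by (simp add: field_simps)
    also have "\<dots> \<le> Q (cutoff eps j) / sqrt (ln (real (cutoff eps j)))"
      using j_ge by (intro ratio_at_cutoff_ge) auto
    finally have "ereal B \<le> ereal (Q (cutoff eps j) / sqrt (ln (real (cutoff eps j))))"
      by simp
    moreover have "cutoff eps j \<in> {n0..}"
      using cutoff_props(3)[OF eps_pos, of j] j_ge by auto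
    ultimately show "ereal B \<le> (SUP m\<in>{n0..}. ereal (Q m / sqrt (ln (real m))))"
      by (meson SUP_upper2)
  qed
qed

lemma Q_ratio_not_tendsto_zero: "\<not> (\<lambda>n. Q n / sqrt (ln (real n))) \<longlonglongrightarrow> 0"
proof
  assume "(\<lambda>n. Q n / sqrt (ln (real n))) \<longlonglongrightarrow> 0"
  then have "limsup (\<lambda>n. ereal (Q n / sqrt (ln (real n)))) = ereal 0"
    by (intro lim_imp_Limsup) (simp_all add: lim_ereal)
  then show False
    using limsup_Q by simp
qed

end

theorem mainTheorem3:
  fixes M :: "'a measure" and X :: "'a \<Rightarrow> real" and eps :: real
  assumes eps: "eps > 0"
    and P: "prob_space M"
    and Xrv: "X \<in> borel_measurable M"
    and Ppos: "\<And>n. n \<ge> 1 \<Longrightarrow>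
        measure M {\<omega>\<in>space M. X \<omega> = kseq eps n} = Cconst / (2 * (kseq eps n)\<^sup>2 * (real n)\<^sup>2)"
    and Pneg: "\<And>n. n \<ge> 1 \<Longrightarrow>
        measure M {\<omega>\<in>space M. X \<omega> = - kseq eps n} = Cconst / (2 * (kseq eps n)\<^sup>2 * (real n)\<^sup>2)"
    and Pzero: "measure M {\<omega>\<in>space M. X \<omega> = 0} =
        1 - (\<Sum>n. Cconst / ((kseq eps (Suc n))\<^sup>2 * (real (Suc n))\<^sup>2))"
  shows "integrable M X \<and> integral\<^sup>L M X = 0
    \<and> integrable M (\<lambda>\<omega>. (X \<omega>)\<^sup>2)
    \<and> integral\<^sup>L M (\<lambda>\<omega>. (X \<omega> - integral\<^sup>L M X)\<^sup>2) = 1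
    \<and> (\<integral>\<^sup>+ \<omega>. ennreal ((X \<omega>)\<^sup>2 * sqrt (logp \<bar>X \<omega>\<bar>)) \<partial>M) = \<infinity>
    \<and> (let \<mu> = (0::real); \<sigma> = (1::real);
           Q = (\<lambda>n::nat. \<Sum>k = 1..n. (1 / real k) *
                 (\<sigma>\<^sup>2 - integral\<^sup>L M (\<lambda>\<omega>. \<bar>X \<omega> - \<mu>\<bar>\<^sup>2 *
                    indicator {\<omega>. \<bar>X \<omega> - \<mu>\<bar> \<le> \<sigma> * real k} \<omega>)))
       in limsup (\<lambda>n. ereal (Q n / sqrt (ln (real n)))) = \<infinity>
        \<and> (\<forall>f :: real \<Rightarrow> real. deriv (deriv f) \<mu> \<noteq> 0 \<longrightarrow>
             (let b = (\<lambda>n::nat. real n * f \<mu> + deriv (deriv f) \<mu> / 2 *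
                        (\<Sum>k = 1..n. (1 / real k) * integral\<^sup>L M (\<lambda>\<omega>. \<bar>X \<omega> - \<mu>\<bar>\<^sup>2 *
                           indicator {\<omega>. \<bar>X \<omega> - \<mu>\<bar> \<le> \<sigma> * real k} \<omega>)));
                  bt = (\<lambda>n::nat. real n * f \<mu> + deriv (deriv f) \<mu> * \<sigma>\<^sup>2 / 2 * ln (real n))
              in (\<lambda>n. b n - bt n) \<notin> o(\<lambda>n. sqrt (ln (real n))))))"
proof -
  interpret counterexample M X eps
    using assms by (simp add: counterexample_def counterexample_axioms_def)
  have trunc: "integral\<^sup>L M (\<lambda>\<omega>. \<bar>X \<omega> - 0\<bar>\<^sup>2 * indicator {\<omega>. \<bar>X \<omega> - 0\<bar> \<le> 1 * real k} \<omega>)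
      = truncated_moment (real k)" for k
    by (simp add: truncated_moment_def)
  have bias: "(\<lambda>n. (real n * f 0 + deriv (deriv f) 0 / 2 *
                 (\<Sum>k = 1..n. 1 / real k * truncated_moment (real k)))
              - (real n * f 0 + deriv (deriv f) 0 / 2 * ln (real n)))
            \<notin> o(\<lambda>n. sqrt (ln (real n)))" if "deriv (deriv f) 0 \<noteq> 0" for f
    using bias_small_imp_ratio_tendsto_zero[OF that] Q_ratio_not_tendsto_zero
    by (auto simp: Q_eq_harm_minus)
  show ?thesis
    unfolding Let_def trunc
    using integrable_X mean_zero second_moment_one log_moment_infinite limsup_Q bias
    by (simp add: Q_def)
qed

end
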